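(* Let $\mathcal{D}$ be the arena of a $p$-periodic graph on $V$ and let $\mathcal{A}$ be an augmented arena of $\mathcal{D}$. Let $t\in\mathbb{Z}_p$, $x,y\in V$ and $z\in\Gamma_t(x,\mathcal{D})$. If $(t,y)$ is a shadow corner of $([t+1]_p,z)$ with respect to $\mathcal{A}$, then the arena $\mathcal{A}'$ with $E(\mathcal{A}')=E(\mathcal{A})\cup\{((t,x),([t+1]_p,y))\}$ is an augmented arena of $\mathcal{D}$.
   Context: Let $V$ be a finite set and $p\ge 1$ an integer; $[t]_p$ denotes $t \bmod p$. A $p$-periodic graph $\mathcal{G}=(G_0,\dots,G_{p-1})^*$ is the infinite sequence of directed graphs $G_t=(V,E_{[t]_p})$ where $E_0,\dots,E_{p-1}\subseteq V\times V$ (self-loops allowed), each $G_i$ sinkless. An arena on $V$ of length $p$ is a directed graph with vertex set $\mathbb{Z}_p\times V$ (temporal nodes) all of whose edges have the form $((i,w),([i+1]_p,w'))$. The arena of $\mathcal{G}$ is the arena $\mathcal{D}$ with $((i,u),([i+1]_p,v))\in E(\mathcal{D})$ iff $(u,v)\in E_i$. Write $\Gamma_t(u,\mathcal{M})=\{v : ((t,u),([t+1]_p,v))\in E(\mathcal{M})\}$. Game: first the cop, then the robber choose vertices. In each round $t$, with cop at $c$ and robber at $r$, the cop must move to some $c'\in\Gamma_{[t]_p}(c,\mathcal{D})$; if $c'=r$ the cop wins; otherwise the robber must move to some $r'\in\Gamma_{[t]_p}(r,\mathcal{D})$ and the next round starts. A configuration $(t,c,r)$ ($t\in\mathbb{Z}_p$)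 is the state at the start of a round with index $\equiv t\pmod p$, cop at $c$, robber at $r$, cop to move; it is copwin if from it the cop can force capture in finitely many rounds against every robber strategy. An augmented arena of $\mathcal{D}$ is an arena $\mathcal{A}$ with $E(\mathcal{D})\subseteq E(\mathcal{A})$ such that for every edge $((t,x),([t+1]_p,y))\in E(\mathcal{A})$ the configuration $(t,x,y)$ is copwin. Given an augmented arena $\mathcal{A}$, a temporal node $(t,u)$ is a shadow corner of the temporal node $([t+1]_p,v)$ (and $([t+1]_p,v)$ a shadow cover of $(t,u)$) if $v\neq u$ and $\Gamma_t(u,\mathcal{D})\subseteq\Gamma_{[t+1]_p}(v,\mathcal{A})$. *)

theory Defs
  imports Main
begin

(* Temporal nodes are pairs (i, w) with i :: nat, 0 <= i < p, representing Z_p x V.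
   A p-periodic graph is given by V and edge sets E 0, ..., E (p-1). *)

definition periodic_graph :: "'v set \<Rightarrow> nat \<Rightarrow> (nat \<Rightarrow> ('v \<times> 'v) set) \<Rightarrow> bool" where
  "periodic_graph V p E \<longleftrightarrow> finite V \<and> p \<ge> 1 \<and>
     (\<forall>i<p. E i \<subseteq> V \<times> V) \<and>
     (\<forall>i<p. \<forall>u\<in>V. \<exists>v. (u, v) \<in> E i)"

type_synonym 'v tnode = "nat \<times> 'v"
type_synonym 'v arena = "('v tnode \<times> 'v tnode) set"

definition is_arena :: "'v set \<Rightarrow> nat \<Rightarrow> 'v arena \<Rightarrow> bool" where
  "is_arena V p M \<longleftrightarrow>
     (\<forall>e\<in>M. \<exists>i w w'. i < p \<and> w \<in> V \<and> w' \<in> V \<and> e = ((i, w), ((i + 1) mod p, w')))"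

definition arena_of :: "nat \<Rightarrow> (nat \<Rightarrow> ('v \<times> 'v) set) \<Rightarrow> 'v arena" where
  "arena_of p E = {((i, u), ((i + 1) mod p, v)) | i u v. i < p \<and> (u, v) \<in> E i}"

definition Gamma :: "nat \<Rightarrow> nat \<Rightarrow> 'v \<Rightarrow> 'v arena \<Rightarrow> 'v set" where
  "Gamma p t u M = {v. ((t, u), ((t + 1) mod p, v)) \<in> M}"

(* copwin_in p D n t c r: from configuration (t,c,r) (cop to move) the cop can force
   capture within n rounds against every robber strategy, game played on arena D. *)
fun copwin_in :: "nat \<Rightarrow> 'v arena \<Rightarrow> nat \<Rightarrow> nat \<Rightarrow> 'v \<Rightarrow> 'v \<Rightarrow> bool" where
  "copwin_in p D 0 t c r = False"
| "copwin_in p D (Suc n) t c r =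
     (\<exists>c' \<in> Gamma p t c D. c' = r \<or>
        (\<forall>r' \<in> Gamma p t r D. copwin_in p D n ((t + 1) mod p) c' r'))"

definition copwin :: "nat \<Rightarrow> 'v arena \<Rightarrow> nat \<Rightarrow> 'v \<Rightarrow> 'v \<Rightarrow> bool" where
  "copwin p D t c r \<longleftrightarrow> (\<exists>n. copwin_in p D n t c r)"

definition augmented_arena :: "'v set \<Rightarrow> nat \<Rightarrow> 'v arena \<Rightarrow> 'v arena \<Rightarrow> bool" where
  "augmented_arena V p D A \<longleftrightarrow> is_arena V p A \<and> D \<subseteq> A \<and>
     (\<forall>t x t' y. ((t, x), (t', y)) \<in> A \<longrightarrow> copwin p D t x y)"

definition shadow_corner :: "nat \<Rightarrow> 'v arena \<Rightarrow> 'v arena \<Rightarrow> nat \<Rightarrow> 'v \<Rightarrow> 'v \<Rightarrow> bool" where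
  "shadow_corner p D A t u v \<longleftrightarrow> v \<noteq> u \<and> Gamma p t u D \<subseteq> Gamma p ((t + 1) mod p) v A"

end

theory Submission
  imports Defs
begin

text \<open>From \<open>(t, x, y)\<close> the cop moves along the graph edge to \<open>z\<close>. Every robber answer
  \<open>y'\<close> from \<open>y\<close> lies in \<open>\<Gamma>\<^sub>t(y, D) \<subseteq> \<Gamma>\<^sub>t\<^sub>+\<^sub>1(z, A)\<close>, so \<open>(t+1, z, y')\<close> is copwin
  because \<open>A\<close> is augmented. As the robber has only finitely many answers, the capture times
  admit a common bound; hence \<open>(t, x, y)\<close> is copwin and the new edge keeps \<open>A\<close> augmented.\<close>

lemma copwin_in_mono:
  "copwin_in p D n t c r \<Longrightarrow> n \<le> m \<Longrightarrow> copwin_in p D m t c r"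
proof (induction n arbitrary: m t c r)
  case 0
  then show ?case by simp
next
  case (Suc n)
  then obtain m' where m: "m = Suc m'" "n \<le> m'" by (cases m) auto
  have IH: "\<And>t c r. copwin_in p D n t c r \<Longrightarrow> copwin_in p D m' t c r"
    using Suc.IH m(2) by blast
  from Suc.prems(1) obtain c' where "c' \<in> Gamma p t c D"
    and "c' = r \<or> (\<forall>r' \<in> Gamma p t r D. copwin_in p D n ((t + 1) mod p) c' r')"
    by auto
  with IH show ?case unfolding m(1) copwin_in.simps by blast
qed

lemma copwin_in_uniform_bound:
  assumes "finite S" and "\<And>r. r \<in> S \<Longrightarrow> copwin p D t c r"
  shows "\<exists>n. \<forall>r \<in> S. copwin_in p D n t c r"
proof -
  obtain f where f: "\<And>r. r \<in> S \<Longrightarrow> copwin_in p D (f r) t c r"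
    using assms(2) unfolding copwin_def by metis
  have "copwin_in p D (Max (f ` S)) t c r" if "r \<in> S" for r
    using copwin_in_mono[OF f[OF that]] assms(1) that by simp
  then show ?thesis by blast
qed

lemma copwin_step:
  assumes "z \<in> Gamma p t x D" and "finite (Gamma p t y D)"
    and "\<And>y'. y' \<in> Gamma p t y D \<Longrightarrow> copwin p D ((t + 1) mod p) z y'"
  shows "copwin p D t x y"
proof -
  obtain n where "\<forall>y' \<in> Gamma p t y D. copwin_in p D n ((t + 1) mod p) z y'"
    using copwin_in_uniform_bound[OF assms(2,3)] by blast
  then have "copwin_in p D (Suc n) t x y"
    using assms(1) by auto
  then show ?thesis unfolding copwin_def by blast
qed

lemma copwin_if_shadow_corner:
  assumes "augmented_arena V p D A" and "shadow_corner p D A t y z"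
    and "z \<in> Gamma p t x D" and "finite (Gamma p t y D)"
  shows "copwin p D t x y"
proof (rule copwin_step[OF assms(3,4)])
  fix y' assume "y' \<in> Gamma p t y D"
  then have "(((t + 1) mod p, z), (((t + 1) mod p + 1) mod p, y')) \<in> A"
    using assms(2) unfolding shadow_corner_def Gamma_def by blast
  then show "copwin p D ((t + 1) mod p) z y'"
    using assms(1) unfolding augmented_arena_def by blast
qed

lemma Gamma_arena_of_subset:
  assumes "periodic_graph V p E"
  shows "Gamma p t u (arena_of p E) \<subseteq> V"
  using assms unfolding periodic_graph_def Gamma_def arena_of_def by auto

lemma augmented_arena_insert:
  assumes "augmented_arena V p D A" and "t < p" and "x \<in> V" and "y \<in> V"
    and "copwin p D t x y"
  shows "augmented_arena V p D (insert ((t, x), ((t + 1) mod p, y)) A)"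
  using assms unfolding augmented_arena_def is_arena_def by auto

theorem theorem2:
  fixes V :: "'v set" and p :: nat and E :: "nat \<Rightarrow> ('v \<times> 'v) set"
    and A :: "'v arena" and t :: nat and x y z :: 'v
  assumes "periodic_graph V p E"
    and "augmented_arena V p (arena_of p E) A"
    and "t < p" and "x \<in> V" and "y \<in> V"
    and "z \<in> Gamma p t x (arena_of p E)"
    and "shadow_corner p (arena_of p E) A t y z"
  shows "augmented_arena V p (arena_of p E) (A \<union> {((t, x), ((t + 1) mod p, y))})"
proof -
  have "finite V"
    using assms(1) unfolding periodic_graph_def by simp
  then have "finite (Gamma p t y (arena_of p E))"
    using Gamma_arena_of_subset[OF assms(1)] by (rule finite_subset[rotated])
  then have "copwin p (arena_of p E) t x y"
    by (rule copwin_if_shadow_corner[OF assms(2,7,6)])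
  then show ?thesis
    using augmented_arena_insert[OF assms(2-5)] by simp
qed

end
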